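(* Let $G$ be a finite abelian group, $T \subsetneq G$ a non-empty subset, and fix $x \in G$ with $T + x \ne T$. Put $T^{\uparrow} = T + x$, $C^{\uparrow} = T^{\uparrow}\setminus T$, $C^{\downarrow} = T \setminus T^{\uparrow}$ and $A = T \cup T^{\uparrow}$. Let $d \ge 1$ and suppose that $0 \le i_1, \dots, i_m \le d$ are distinct integers. Then $\left(A^d \setminus (C_{i_1,d}\cup\dots\cup C_{i_m,d})\right)^{\dagger m}$ is a hole in $A^{d+m}$.
   Context: For integers $1 \le i \le e$, $C_{i,e} = C^{\downarrow}\times\dots\times C^{\uparrow}\times\dots\times C^{\downarrow} \subset A^e$ ($e$ factors, $C^{\uparrow}$ in the $i$-th factor, $C^{\downarrow}$ elsewhere), and $C_{0,e} = (C^{\downarrow})^e$. A copy of $T$ in $G^e$ is a translate $\mathsf{T}_j + y$ ($y\in G^e$, $1\le j\le e$), where $\mathsf{T}_j$ is the set of points of $G^e$ with $j$-th coordinate in $T$ and other coordinates $0$; a set is $T$-tilable if it is a disjoint union of copies of $T$. A set $X \subset A^e$ is a hole in $A^e$ if $A^e \setminus X$ is $T$-tilable. For $X \subset A^e$, define $X^{\dagger} = (X \times C^{\downarrow}) \cup C_{e+1,e+1} \subset A^{e+1}$, and for $m \ge 1$ let $X^{\dagger m}$ be the result of $m$ consecutive applications of $\dagger$ (each in the dimension of the current ambient set), a subset of $A^{e+m}$. *)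

theory Defs
  imports Main
begin

text \<open>G is an abelian group type 'a (finite); points of G^e are lists of length e;
  coordinate k (1-based) of the paper is list index k-1.\<close>

definition Tup :: "'a::ab_group_add set \<Rightarrow> 'a \<Rightarrow> 'a set" where
  "Tup T x = (\<lambda>t. t + x) ` T"

definition Cup :: "'a::ab_group_add set \<Rightarrow> 'a \<Rightarrow> 'a set" where
  "Cup T x = Tup T x - T"

definition Cdown :: "'a::ab_group_add set \<Rightarrow> 'a \<Rightarrow> 'a set" where
  "Cdown T x = T - Tup T x"

definition Aset :: "'a::ab_group_add set \<Rightarrow> 'a \<Rightarrow> 'a set" where
  "Aset T x = T \<union> Tup T x"

definition cpow :: "'a set \<Rightarrow> nat \<Rightarrow> 'a list set" where
  "cpow S e = {xs. length xs = e \<and> set xs \<subseteq> S}"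

text \<open>C_{i,e}: C^up in the i-th factor (1-based), C^down elsewhere; i = 0 gives (C^down)^e.\<close>
definition Cset :: "'a::ab_group_add set \<Rightarrow> 'a \<Rightarrow> nat \<Rightarrow> nat \<Rightarrow> 'a list set" where
  "Cset T x i e = {xs. length xs = e \<and>
     (\<forall>k<e. xs ! k \<in> (if k + 1 = i then Cup T x else Cdown T x))}"

definition Tcoord :: "'a::ab_group_add set \<Rightarrow> nat \<Rightarrow> nat \<Rightarrow> 'a list set" where
  "Tcoord T e j = {xs. length xs = e \<and> xs ! (j - 1) \<in> T \<and>
     (\<forall>k<e. k \<noteq> j - 1 \<longrightarrow> xs ! k = 0)}"

definition translate :: "'a::ab_group_add list set \<Rightarrow> 'a list \<Rightarrow> 'a list set" where
  "translate S y = (\<lambda>z. map2 (+) z y) ` S"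

definition copies :: "'a::ab_group_add set \<Rightarrow> nat \<Rightarrow> 'a list set set" where
  "copies T e = {translate (Tcoord T e j) y | j y. 1 \<le> j \<and> j \<le> e \<and> length y = e}"

definition tilable :: "'a::ab_group_add set \<Rightarrow> nat \<Rightarrow> 'a list set \<Rightarrow> bool" where
  "tilable T e X \<longleftrightarrow> (\<exists>P. P \<subseteq> copies T e \<and> pairwise disjnt P \<and> \<Union>P = X)"

definition hole :: "'a::ab_group_add set \<Rightarrow> 'a \<Rightarrow> nat \<Rightarrow> 'a list set \<Rightarrow> bool" where
  "hole T x e X \<longleftrightarrow> X \<subseteq> cpow (Aset T x) e \<and> tilable T e (cpow (Aset T x) e - X)"

definition dagger :: "'a::ab_group_add set \<Rightarrow> 'a \<Rightarrow> nat \<Rightarrow> 'a list set \<Rightarrow> 'a list set" where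
  "dagger T x e X = {xs @ [c] | xs c. xs \<in> X \<and> c \<in> Cdown T x} \<union> Cset T x (e + 1) (e + 1)"

fun dagger_pow :: "'a::ab_group_add set \<Rightarrow> 'a \<Rightarrow> nat \<Rightarrow> nat \<Rightarrow> 'a list set \<Rightarrow> 'a list set" where
  "dagger_pow T x 0 e X = X"
| "dagger_pow T x (Suc m) e X = dagger T x (e + m) (dagger_pow T x m e X)"

end

theory Submission
  imports Defs
begin

text \<open>
  Split a point of \<open>A^(e+1)\<close> into its first \<open>e\<close> coordinates and its last one. Since \<open>A\<close> is
  the disjoint union of \<open>C\<^sup>\<down>\<close> and \<open>T\<^sup>\<up>\<close>, the complement of \<open>X\<^sup>\<dagger>\<close> in \<open>A^(e+1)\<close> is
  \<open>(A^e - X) \<times> C\<^sup>\<down>\<close> together with a set \<open>R\<close> that does not depend on \<open>X\<close>. For every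
  \<open>i \<le> e\<close> the set \<open>C_{i,e+1} \<union> R\<close> is tiled explicitly by copies of \<open>T\<close> along the last
  coordinate and along coordinate \<open>i\<close>. Hence if \<open>A^e - X\<close> is a tilable set together with
  disjoint blocks \<open>C_{i,e}\<close>, \<open>i \<in> I\<close>, then \<open>A^(e+1) - X\<^sup>\<dagger>\<close> is a tilable set together with
  the blocks \<open>C_{i,e+1}\<close> for all but one \<open>i \<in> I\<close>: each application of \<open>\<dagger>\<close> absorbs one
  block, and after \<open>|I|\<close> applications the whole complement is tilable.
\<close>

lemma tilable_empty: "tilable T e {}"
  unfolding tilable_def by (intro exI[of _ "{}"]) auto

lemma tilable_Union:
  assumes "\<And>S. S \<in> \<S> \<Longrightarrow> tilable T e S" and "pairwise disjnt \<S>"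
  shows "tilable T e (\<Union>\<S>)"
proof -
  have "\<forall>S\<in>\<S>. \<exists>P. P \<subseteq> copies T e \<and> pairwise disjnt P \<and> \<Union>P = S"
    using assms(1) unfolding tilable_def by blast
  then obtain P where P: "\<And>S. S \<in> \<S> \<Longrightarrow> P S \<subseteq> copies T e \<and> pairwise disjnt (P S) \<and> \<Union>(P S) = S"
    by (metis bchoice)
  have "pairwise disjnt (\<Union>S\<in>\<S>. P S)"
  proof (rule pairwiseI)
    fix a b assume "a \<in> (\<Union>S\<in>\<S>. P S)" "b \<in> (\<Union>S\<in>\<S>. P S)" "a \<noteq> b"
    then obtain S S' where S: "S \<in> \<S>" "S' \<in> \<S>" "a \<in> P S" "b \<in> P S'" by blast
    show "disjnt a b"
    proof (cases "S = S'")
      case True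
      then show ?thesis using P[OF S(1)] S \<open>a \<noteq> b\<close> by (auto simp: pairwise_def)
    next
      case False
      then have "disjnt S S'" using assms(2) S(1,2) by (simp add: pairwise_def)
      moreover have "a \<subseteq> S" "b \<subseteq> S'" using P S by blast+
      ultimately show ?thesis by (auto simp: disjnt_def)
    qed
  qed
  moreover have "(\<Union>S\<in>\<S>. P S) \<subseteq> copies T e"
    using P by blast
  moreover have "\<Union>(\<Union>S\<in>\<S>. P S) = \<Union>\<S>"
  proof -
    have "\<Union>(\<Union>S\<in>\<S>. P S) = (\<Union>S\<in>\<S>. \<Union>(P S))"
      by blast
    also have "\<dots> = \<Union>\<S>"
      using P by simp
    finally show ?thesis .
  qed
  ultimately show ?thesis
    unfolding tilable_def by blast
qed

lemma tilable_Un: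
  assumes "tilable T e S" "tilable T e S'" "disjnt S S'"
  shows "tilable T e (S \<union> S')"
proof -
  have "tilable T e (\<Union>{S, S'})"
    by (rule tilable_Union) (use assms in \<open>auto simp: pairwise_insert disjnt_sym\<close>)
  then show ?thesis by simp
qed

lemma translate_Tcoord:
  assumes "p < e" "length y = e"
  shows "translate (Tcoord T e (Suc p)) y =
    {ys. length ys = e \<and> ys ! p \<in> (\<lambda>t. t + y ! p) ` T \<and> (\<forall>k<e. k \<noteq> p \<longrightarrow> ys ! k = y ! k)}"
proof (intro equalityI subsetI)
  fix ys assume "ys \<in> translate (Tcoord T e (Suc p)) y"
  then obtain z where "z \<in> Tcoord T e (Suc p)" and "ys = map2 (+) z y"
    unfolding translate_def by auto
  then show "ys \<in> {ys. length ys = e \<and> ys ! p \<in> (\<lambda>t. t + y ! p) ` T \<and> (\<forall>k<e. k \<noteq> p \<longrightarrow> ys ! k = y ! k)}"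
    using assms by (auto simp: Tcoord_def)
next
  fix ys assume ys: "ys \<in> {ys. length ys = e \<and> ys ! p \<in> (\<lambda>t. t + y ! p) ` T \<and> (\<forall>k<e. k \<noteq> p \<longrightarrow> ys ! k = y ! k)}"
  have "map2 (-) ys y \<in> Tcoord T e (Suc p)"
    using ys assms by (auto simp: Tcoord_def)
  moreover have "ys = map2 (+) (map2 (-) ys y) y"
    using ys assms by (intro nth_equalityI) auto
  ultimately show "ys \<in> translate (Tcoord T e (Suc p)) y"
    unfolding translate_def by blast
qed

lemma tilable_lines:
  assumes "p < N"
    and B_length: "\<And>xs. xs \<in> B \<Longrightarrow> length xs = N"
    and B_update: "\<And>xs a. xs \<in> B \<Longrightarrow> xs[p := a] \<in> B"
  shows "tilable T N {xs \<in> B. xs ! p \<in> (\<lambda>t. t + z) ` T}"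
proof -
  define line where "line w = translate (Tcoord T N (Suc p)) (w[p := z])" for w
  have line_iff: "ys \<in> line w \<longleftrightarrow>
      length ys = N \<and> ys ! p \<in> (\<lambda>t. t + z) ` T \<and> (\<forall>k<N. k \<noteq> p \<longrightarrow> ys ! k = w ! k)"
    if "length w = N" for w ys
    using that \<open>p < N\<close> by (simp add: line_def translate_Tcoord)
  have "line w \<in> copies T N" if "w \<in> B" for w
    using \<open>p < N\<close> B_length[OF that] unfolding copies_def line_def
    by (intro CollectI exI[of _ "Suc p"] exI[of _ "w[p := z]"]) simp
  then have "line ` B \<subseteq> copies T N" by blast
  moreover have "pairwise disjnt (line ` B)"
  proof (rule pairwise_imageI)
    fix v w assume "v \<in> B" "w \<in> B" "line v \<noteq> line w"
    show "disjnt (line v) (line w)"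
    proof (rule ccontr)
      assume "\<not> disjnt (line v) (line w)"
      then obtain ys where "ys \<in> line v" "ys \<in> line w"
        unfolding disjnt_def by blast
      then have "\<forall>k<N. k \<noteq> p \<longrightarrow> v ! k = w ! k"
        using line_iff[of v] line_iff[of w] B_length \<open>v \<in> B\<close> \<open>w \<in> B\<close> by auto
      then have "line v = line w"
        using line_iff[of v] line_iff[of w] B_length \<open>v \<in> B\<close> \<open>w \<in> B\<close> by auto
      with \<open>line v \<noteq> line w\<close> show False ..
    qed
  qed
  moreover have "\<Union>(line ` B) = {xs \<in> B. xs ! p \<in> (\<lambda>t. t + z) ` T}"
  proof (intro equalityI subsetI)
    fix ys assume "ys \<in> \<Union>(line ` B)"
    then obtain w where w: "w \<in> B" "ys \<in> line w" by blast
    then have ys: "length ys = N" "ys ! p \<in> (\<lambda>t. t + z) ` T" "\<forall>k<N. k \<noteq> p \<longrightarrow> ys ! k = w ! k"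
      using line_iff B_length by blast+
    then have "ys = w[p := ys ! p]"
      using B_length[OF w(1)] \<open>p < N\<close> by (intro nth_equalityI) (auto simp: nth_list_update)
    then show "ys \<in> {xs \<in> B. xs ! p \<in> (\<lambda>t. t + z) ` T}"
      using B_update[OF \<open>w \<in> B\<close>] ys by auto
  next
    fix xs assume "xs \<in> {xs \<in> B. xs ! p \<in> (\<lambda>t. t + z) ` T}"
    then show "xs \<in> \<Union>(line ` B)"
      using line_iff B_length by blast
  qed
  ultimately show ?thesis
    unfolding tilable_def by blast
qed

lemma Tcoord_Suc:
  assumes "1 \<le> j" "j \<le> e"
  shows "Tcoord T (Suc e) j = (\<lambda>z. z @ [0]) ` Tcoord T e j"
proof (intro equalityI subsetI)
  fix zs assume zs: "zs \<in> Tcoord T (Suc e) j"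
  then obtain z c where zc: "zs = z @ [c]" and "length z = e"
    unfolding Tcoord_def by (cases zs rule: rev_cases) auto
  have "c = zs ! e"
    using zc \<open>length z = e\<close> by (metis nth_append_length)
  also have "\<dots> = 0"
    using zs assms unfolding Tcoord_def by auto
  finally have "c = 0" .
  moreover have "z \<in> Tcoord T e j"
  proof -
    have "z ! k = zs ! k" if "k < e" for k
      using zc \<open>length z = e\<close> that by (simp add: nth_append)
    then show ?thesis
      using zs assms \<open>length z = e\<close> unfolding Tcoord_def by auto
  qed
  ultimately show "zs \<in> (\<lambda>z. z @ [0]) ` Tcoord T e j"
    using zc by blast
next
  fix zs assume "zs \<in> (\<lambda>z. z @ [0]) ` Tcoord T e j"
  then obtain z where "z \<in> Tcoord T e j" "zs = z @ [0]" by blast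
  then show "zs \<in> Tcoord T (Suc e) j"
    using assms unfolding Tcoord_def by (auto simp: nth_append)
qed

lemma copies_snoc:
  assumes "Q \<in> copies T e"
  shows "(\<lambda>q. q @ [c]) ` Q \<in> copies T (Suc e)"
proof -
  obtain j y where Q: "Q = translate (Tcoord T e j) y" and j: "1 \<le> j" "j \<le> e" and "length y = e"
    using assms unfolding copies_def by blast
  have "map2 (+) (z @ [0]) (y @ [c]) = map2 (+) z y @ [c]" if "z \<in> Tcoord T e j" for z
    using that \<open>length y = e\<close> by (simp add: Tcoord_def)
  then have "(\<lambda>q. q @ [c]) ` Q = translate (Tcoord T (Suc e) j) (y @ [c])"
    unfolding Q translate_def Tcoord_Suc[OF j] image_image by (intro image_cong) auto
  then show ?thesis
    using j \<open>length y = e\<close> unfolding copies_def by fastforce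
qed

lemma tilable_image_snoc:
  assumes "tilable T e F"
  shows "tilable T (Suc e) ((\<lambda>q. q @ [c]) ` F)"
proof -
  obtain P where P: "P \<subseteq> copies T e" "pairwise disjnt P" "\<Union>P = F"
    using assms unfolding tilable_def by blast
  let ?P = "(\<lambda>Q. (\<lambda>q. q @ [c]) ` Q) ` P"
  have "?P \<subseteq> copies T (Suc e)"
    using P(1) copies_snoc by blast
  moreover have "pairwise disjnt ?P"
  proof (rule pairwise_imageI)
    fix Q Q' assume "Q \<in> P" "Q' \<in> P" "(\<lambda>q. q @ [c]) ` Q \<noteq> (\<lambda>q. q @ [c]) ` Q'"
    then have "disjnt Q Q'"
      using P(2) by (auto simp: pairwise_def)
    then show "disjnt ((\<lambda>q. q @ [c]) ` Q) ((\<lambda>q. q @ [c]) ` Q')"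
      by (auto simp: disjnt_def)
  qed
  moreover have "\<Union>?P = (\<lambda>q. q @ [c]) ` F"
    using P(3) by blast
  ultimately show ?thesis
    unfolding tilable_def by blast
qed

definition snoc_prod :: "'a list set \<Rightarrow> 'a set \<Rightarrow> 'a list set" where
  "snoc_prod Y W = {ys @ [t] | ys t. ys \<in> Y \<and> t \<in> W}"

lemma snoc_in_snoc_prod [simp]: "ys @ [t] \<in> snoc_prod Y W \<longleftrightarrow> ys \<in> Y \<and> t \<in> W"
  by (auto simp: snoc_prod_def)

lemma Nil_notin_snoc_prod [simp]: "[] \<notin> snoc_prod Y W"
  by (auto simp: snoc_prod_def)

lemma snoc_set_eqI:
  assumes "[] \<notin> S" "[] \<notin> S'" "\<And>ys t. ys @ [t] \<in> S \<longleftrightarrow> ys @ [t] \<in> S'"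
  shows "S = S'"
proof (rule set_eqI)
  fix xs show "xs \<in> S \<longleftrightarrow> xs \<in> S'"
    using assms by (cases xs rule: rev_cases) auto
qed

lemma disjnt_snoc_prod_iff: "disjnt (snoc_prod Y W) (snoc_prod Y' W') \<longleftrightarrow> disjnt (Y \<times> W) (Y' \<times> W')"
  by (auto simp: snoc_prod_def disjnt_def)

lemma snoc_prod_eq_UN: "snoc_prod Y W = (\<Union>c\<in>W. (\<lambda>q. q @ [c]) ` Y)"
  by (auto simp: snoc_prod_def)

lemma tilable_snoc_prod:
  assumes "tilable T e F"
  shows "tilable T (Suc e) (snoc_prod F W)"
  unfolding snoc_prod_eq_UN
proof (rule tilable_Union)
  show "pairwise disjnt ((\<lambda>c. (\<lambda>q. q @ [c]) ` F) ` W)"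
    by (rule pairwise_imageI) (auto simp: disjnt_def)
qed (use tilable_image_snoc[OF assms] in blast)

lemma tilable_snoc_prod_translate:
  assumes "\<And>ys. ys \<in> Y \<Longrightarrow> length ys = e"
  shows "tilable T (Suc e) (snoc_prod Y ((\<lambda>t. t + z) ` T))"
proof -
  let ?B = "snoc_prod Y UNIV"
  have "tilable T (Suc e) {xs \<in> ?B. xs ! e \<in> (\<lambda>t. t + z) ` T}"
  proof (rule tilable_lines)
    show "length xs = Suc e" if "xs \<in> ?B" for xs
      using that assms by (auto simp: snoc_prod_def)
    show "xs[e := a] \<in> ?B" if "xs \<in> ?B" for xs a
      using that assms by (force simp: snoc_prod_def list_update_append)
  qed simp
  moreover have "{xs \<in> ?B. xs ! e \<in> (\<lambda>t. t + z) ` T} = snoc_prod Y ((\<lambda>t. t + z) ` T)"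
    using assms by (intro snoc_set_eqI) (auto simp: nth_append)
  ultimately show ?thesis by simp
qed

text \<open>Coordinate \<open>p\<close> is a list index, i.e. coordinate \<open>p + 1\<close> of the paper; for \<open>p < e\<close>,
  \<open>C_{0,e}\<close> and \<open>C_{p+1,e}\<close> are the cylinders with \<open>D = C\<^sup>\<down>\<close> and \<open>S = C\<^sup>\<down>\<close>, \<open>C\<^sup>\<up>\<close>.\<close>

definition cylinder :: "nat \<Rightarrow> nat \<Rightarrow> 'a set \<Rightarrow> 'a set \<Rightarrow> 'a list set" where
  "cylinder e p D S = {ys. length ys = e \<and> ys ! p \<in> S \<and> (\<forall>k<e. k \<noteq> p \<longrightarrow> ys ! k \<in> D)}"

lemma tilable_snoc_prod_cylinder:
  assumes "p < e"
  shows "tilable T (Suc e) (snoc_prod (cylinder e p D ((\<lambda>t. t + z) ` T)) W)"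
proof -
  let ?B = "snoc_prod (cylinder e p D UNIV) W"
  have "tilable T (Suc e) {xs \<in> ?B. xs ! p \<in> (\<lambda>t. t + z) ` T}"
  proof (rule tilable_lines)
    show "length xs = Suc e" if "xs \<in> ?B" for xs
      using that by (auto simp: snoc_prod_def cylinder_def)
    show "xs[p := a] \<in> ?B" if "xs \<in> ?B" for xs a
      using that \<open>p < e\<close> by (auto simp: snoc_prod_def cylinder_def list_update_append nth_list_update)
  qed (use assms in simp)
  moreover have "{xs \<in> ?B. xs ! p \<in> (\<lambda>t. t + z) ` T} = snoc_prod (cylinder e p D ((\<lambda>t. t + z) ` T)) W"
    using assms by (intro snoc_set_eqI) (auto simp: cylinder_def nth_append)
  ultimately show ?thesis by simp
qed

lemma mem_cpow_iff: "ys \<in> cpow S e \<longleftrightarrow> length ys = e \<and> (\<forall>k<e. ys ! k \<in> S)"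
  unfolding cpow_def subset_eq mem_Collect_eq by (auto simp: all_set_conv_all_nth)

lemma cpow_Suc: "cpow S (Suc e) = snoc_prod (cpow S e) S"
  by (rule snoc_set_eqI) (auto simp: cpow_def)

lemma snoc_in_Cset_iff:
  "ys @ [t] \<in> Cset T x i (Suc e) \<longleftrightarrow>
     ys \<in> Cset T x (if i = Suc e then 0 else i) e \<and> t \<in> (if i = Suc e then Cup T x else Cdown T x)"
proof (cases "length ys = e")
  case True
  define F where "F k = (if k + 1 = i then Cup T x else Cdown T x)" for k
  have "ys @ [t] \<in> Cset T x i (Suc e) \<longleftrightarrow> (\<forall>k<Suc e. (ys @ [t]) ! k \<in> F k)"
    using True by (simp add: Cset_def F_def)
  also have "\<dots> \<longleftrightarrow> (\<forall>k<e. ys ! k \<in> F k) \<and> t \<in> F e"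
    using True by (auto simp: All_less_Suc nth_append)
  finally show ?thesis
    using True by (cases "i = Suc e") (auto simp: Cset_def F_def)
qed (simp add: Cset_def)

lemma Nil_notin_Cset_Suc [simp]: "[] \<notin> Cset T x i (Suc e)"
  by (simp add: Cset_def)

lemma Cset_Suc: "i \<noteq> Suc e \<Longrightarrow> Cset T x i (Suc e) = snoc_prod (Cset T x i e) (Cdown T x)"
  by (rule snoc_set_eqI) (simp_all add: snoc_in_Cset_iff)

lemma Cset_Suc_self: "Cset T x (Suc e) (Suc e) = snoc_prod (Cset T x 0 e) (Cup T x)"
  by (rule snoc_set_eqI) (simp_all add: snoc_in_Cset_iff)

lemma Cset_subset_cpow: "Cset T x i e \<subseteq> cpow (Aset T x) e"
  by (auto simp: Cset_def cpow_def Aset_def Cup_def Cdown_def in_set_conv_nth split: if_splits)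

lemma Cset_disjoint:
  assumes "i \<noteq> i'" "i \<le> e" "i' \<le> e"
  shows "disjnt (Cset T x i e) (Cset T x i' e)"
proof -
  define k where "k = (if i = 0 then i' - 1 else i - 1)"
  have "k < e" "(k + 1 = i) \<noteq> (k + 1 = i')"
    using assms by (auto simp: k_def)
  then show ?thesis
    by (auto simp: disjnt_def Cset_def Cup_def Cdown_def)
qed

lemma dagger_eq: "dagger T x e X = snoc_prod X (Cdown T x) \<union> snoc_prod (Cset T x 0 e) (Cup T x)"
  by (simp add: dagger_def Cset_Suc_self flip: snoc_prod_def)

lemma dagger_subset_cpow:
  "X \<subseteq> cpow (Aset T x) e \<Longrightarrow> dagger T x e X \<subseteq> cpow (Aset T x) (Suc e)"
  using Cset_subset_cpow[of T x 0 e]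
  by (auto simp: dagger_eq cpow_Suc snoc_prod_def Aset_def Cdown_def Cup_def)

lemma dagger_pow_subset_cpow:
  "X \<subseteq> cpow (Aset T x) e \<Longrightarrow> dagger_pow T x m e X \<subseteq> cpow (Aset T x) (e + m)"
  by (induction m) (simp_all add: dagger_subset_cpow)

lemma dagger_pow_Suc_right: "dagger_pow T x (Suc m) e X = dagger_pow T x m (Suc e) (dagger T x e X)"
  by (induction m) simp_all

lemma disjnt_dagger_Cset:
  assumes "j \<le> e" "disjnt X (Cset T x j e)"
  shows "disjnt (dagger T x e X) (Cset T x j (Suc e))"
  using assms by (auto simp: dagger_eq Cset_Suc disjnt_def snoc_prod_def Cup_def Cdown_def)

definition dagger_rest :: "'a::ab_group_add set \<Rightarrow> 'a \<Rightarrow> nat \<Rightarrow> 'a list set" where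
  "dagger_rest T x e =
     snoc_prod (cpow (Aset T x) e - Cset T x 0 e) (Tup T x) \<union> snoc_prod (Cset T x 0 e) (T \<inter> Tup T x)"

lemma cpow_diff_dagger:
  assumes "X \<subseteq> cpow (Aset T x) e"
  shows "cpow (Aset T x) (Suc e) - dagger T x e X =
    snoc_prod (cpow (Aset T x) e - X) (Cdown T x) \<union> dagger_rest T x e"
  unfolding dagger_eq cpow_Suc dagger_rest_def
  using assms Cset_subset_cpow[of T x 0 e]
  by (intro snoc_set_eqI) (auto simp: Aset_def Cup_def Cdown_def)

lemma cpow_diff_dagger_diff_Cset:
  assumes "X \<subseteq> cpow (Aset T x) e" "i \<le> e" "\<forall>j\<in>J. j \<le> e" "i \<notin> J"
    and "disjnt X (\<Union>j\<in>insert i J. Cset T x j e)"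
  shows "cpow (Aset T x) (Suc e) - dagger T x e X - (\<Union>j\<in>J. Cset T x j (Suc e)) =
    snoc_prod (cpow (Aset T x) e - X - (\<Union>j\<in>insert i J. Cset T x j e)) (Cdown T x) \<union>
    (Cset T x i (Suc e) \<union> dagger_rest T x e)"
proof -
  have Cset_Suc_e: "Cset T x j (Suc e) = snoc_prod (Cset T x j e) (Cdown T x)" if "j \<in> insert i J" for j
    using assms(2,3) that by (intro Cset_Suc) auto
  have "ys \<notin> X" if "ys \<in> Cset T x i e" for ys
    using that assms(5) by (auto simp: disjnt_def)
  moreover have "ys \<in> cpow (Aset T x) e" if "ys \<in> Cset T x i e" for ys
    using that Cset_subset_cpow by blast
  moreover have "ys \<notin> Cset T x j e" if "ys \<in> Cset T x i e" "j \<in> J" for ys j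
    using that assms(2-4) Cset_disjoint[of i j e T x] by (auto simp: disjnt_def)
  ultimately show ?thesis
    unfolding cpow_diff_dagger[OF assms(1)] using Cset_Suc_e
    by (intro snoc_set_eqI) (auto simp: dagger_rest_def Cdown_def)
qed

lemma tilable_Cset_0_Un_dagger_rest: "tilable T (Suc e) (Cset T x 0 (Suc e) \<union> dagger_rest T x e)"
proof -
  let ?C = "Cset T x 0 e"
  have "Cset T x 0 (Suc e) \<union> dagger_rest T x e =
      snoc_prod (cpow (Aset T x) e - ?C) (Tup T x) \<union> snoc_prod ?C T"
    by (intro snoc_set_eqI) (auto simp: Cset_Suc dagger_rest_def Cdown_def)
  moreover have "tilable T (Suc e) \<dots>"
  proof (rule tilable_Un)
    show "tilable T (Suc e) (snoc_prod (cpow (Aset T x) e - ?C) (Tup T x))"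
      unfolding Tup_def by (rule tilable_snoc_prod_translate) (simp add: cpow_def)
    show "tilable T (Suc e) (snoc_prod ?C T)"
      using tilable_snoc_prod_translate[of ?C e T 0] by (simp add: Cset_def)
    show "disjnt (snoc_prod (cpow (Aset T x) e - ?C) (Tup T x)) (snoc_prod ?C T)"
      unfolding disjnt_snoc_prod_iff by (auto simp: disjnt_def)
  qed
  ultimately show ?thesis by simp
qed

text \<open>Within the cylinder a point is determined, up to the fixed coordinates, by its \<open>p\<close>-th
  and its last entry; the last three blocks cover the pairs of entries that occur, the first
  block everything outside the cylinder.\<close>

lemma Cset_Suc_Un_dagger_rest_eq:
  assumes "p < e"
  shows "Cset T x (Suc p) (Suc e) \<union> dagger_rest T x e =
    snoc_prod (cpow (Aset T x) e - cylinder e p (Cdown T x) (Aset T x)) (Tup T x) \<union>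
    snoc_prod (cylinder e p (Cdown T x) (Cup T x)) T \<union>
    snoc_prod (cylinder e p (Cdown T x) T) (T \<inter> Tup T x) \<union>
    snoc_prod (cylinder e p (Cdown T x) (Tup T x)) (Cup T x)"
    (is "_ = ?R")
proof -
  define down_off where "down_off ys \<longleftrightarrow> (\<forall>k<e. k \<noteq> p \<longrightarrow> ys ! k \<in> Cdown T x)" for ys
  have cyl: "ys \<in> cylinder e p (Cdown T x) S \<longleftrightarrow> length ys = e \<and> down_off ys \<and> ys ! p \<in> S" for ys S
    by (auto simp: cylinder_def down_off_def)
  have C0: "ys \<in> Cset T x 0 e \<longleftrightarrow> length ys = e \<and> down_off ys \<and> ys ! p \<in> Cdown T x" for ys
    using assms by (auto simp: Cset_def down_off_def)
  have Cp: "ys \<in> Cset T x (Suc p) e \<longleftrightarrow> length ys = e \<and> down_off ys \<and> ys ! p \<in> Cup T x" for ys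
    using assms by (auto simp: Cset_def down_off_def)
  have len: "ys \<in> cpow (Aset T x) e \<Longrightarrow> length ys = e" for ys
    by (simp add: cpow_def)
  have cp: "ys \<in> cpow (Aset T x) e \<longleftrightarrow> ys ! p \<in> Aset T x"
    if "length ys = e" "down_off ys" for ys
  proof -
    have "ys ! k \<in> Aset T x" if "k < e" "ys ! p \<in> Aset T x" for k
      using that \<open>down_off ys\<close> by (cases "k = p") (auto simp: down_off_def Aset_def Cdown_def)
    then show ?thesis
      using \<open>length ys = e\<close> assms by (auto simp: mem_cpow_iff)
  qed
  have Cset_Suc_p: "Cset T x (Suc p) (Suc e) = snoc_prod (Cset T x (Suc p) e) (Cdown T x)"
    using assms by (simp add: Cset_Suc)
  have "ys @ [t] \<in> Cset T x (Suc p) (Suc e) \<union> dagger_rest T x e \<longleftrightarrow> ys @ [t] \<in> ?R" for ys t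
  proof (cases "length ys = e \<and> down_off ys")
    case True
    then show ?thesis
      by (simp add: Cset_Suc_p dagger_rest_def cyl C0 Cp cp) (auto simp: Cup_def Cdown_def Aset_def)
  next
    case False
    then show ?thesis
      using len by (auto simp: Cset_Suc_p dagger_rest_def cyl C0 Cp)
  qed
  then show ?thesis
    by (intro snoc_set_eqI) (auto simp: dagger_rest_def)
qed

lemma tilable_Cset_Suc_Un_dagger_rest:
  assumes "p < e"
  shows "tilable T (Suc e) (Cset T x (Suc p) (Suc e) \<union> dagger_rest T x e)"
proof -
  let ?Cyl = "cylinder e p (Cdown T x)"
  define S1 where "S1 = snoc_prod (cpow (Aset T x) e - ?Cyl (Aset T x)) (Tup T x)"
  define S2 where "S2 = snoc_prod (?Cyl (Cup T x)) T"
  define S3 where "S3 = snoc_prod (?Cyl T) (T \<inter> Tup T x)"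
  define S4 where "S4 = snoc_prod (?Cyl (Tup T x)) (Cup T x)"
  have "tilable T (Suc e) (\<Union>{S1, S2, S3, S4})"
  proof (rule tilable_Union)
    have "tilable T (Suc e) S1"
      unfolding S1_def Tup_def by (rule tilable_snoc_prod_translate) (simp add: cpow_def)
    moreover have "tilable T (Suc e) S2"
      using tilable_snoc_prod_translate[of "?Cyl (Cup T x)" e T 0] by (simp add: S2_def cylinder_def)
    moreover have "tilable T (Suc e) S3"
      using tilable_snoc_prod_cylinder[OF assms, of T "Cdown T x" 0 "T \<inter> Tup T x"] by (simp add: S3_def)
    moreover have "tilable T (Suc e) S4"
      unfolding S4_def Tup_def by (rule tilable_snoc_prod_cylinder[OF assms])
    ultimately show "tilable T (Suc e) S" if "S \<in> {S1, S2, S3, S4}" for S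
      using that by blast
    have "disjnt S1 S2" "disjnt S1 S3" "disjnt S1 S4" "disjnt S2 S3" "disjnt S2 S4" "disjnt S3 S4"
      unfolding S1_def S2_def S3_def S4_def disjnt_snoc_prod_iff
      by (auto simp: disjnt_def cylinder_def Cup_def Cdown_def Aset_def)
    then show "pairwise disjnt {S1, S2, S3, S4}"
      by (auto simp: pairwise_insert disjnt_sym)
  qed
  then show ?thesis
    unfolding Cset_Suc_Un_dagger_rest_eq[OF assms] by (simp add: S1_def S2_def S3_def S4_def Un_assoc)
qed

lemma tilable_Cset_Un_dagger_rest:
  "i \<le> e \<Longrightarrow> tilable T (Suc e) (Cset T x i (Suc e) \<union> dagger_rest T x e)"
  by (cases i) (simp_all add: tilable_Cset_0_Un_dagger_rest tilable_Cset_Suc_Un_dagger_rest)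

lemma tilable_cpow_diff_dagger_pow:
  assumes "X \<subseteq> cpow (Aset T x) e" "distinct is" "\<forall>i\<in>set is. i \<le> e"
    and "disjnt X (\<Union>i\<in>set is. Cset T x i e)"
    and "tilable T e (cpow (Aset T x) e - X - (\<Union>i\<in>set is. Cset T x i e))"
  shows "tilable T (e + length is) (cpow (Aset T x) (e + length is) - dagger_pow T x (length is) e X)"
  using assms
proof (induction "is" arbitrary: e X)
  case Nil
  then show ?case by simp
next
  case (Cons i "is")
  let ?X' = "dagger T x e X"
  have "?X' \<subseteq> cpow (Aset T x) (Suc e)"
    using Cons.prems(1) by (rule dagger_subset_cpow)
  moreover have "distinct is"
    using Cons.prems(2) by simp
  moreover have "\<forall>j\<in>set is. j \<le> Suc e"
    using Cons.prems(3) by auto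
  moreover have "disjnt ?X' (\<Union>j\<in>set is. Cset T x j (Suc e))"
  proof -
    have "disjnt ?X' (Cset T x j (Suc e))" if "j \<in> set is" for j
      using that Cons.prems(3,4) by (intro disjnt_dagger_Cset) (auto simp: disjnt_def)
    then show ?thesis
      by (auto simp: disjnt_def)
  qed
  moreover have "tilable T (Suc e) (cpow (Aset T x) (Suc e) - ?X' - (\<Union>j\<in>set is. Cset T x j (Suc e)))"
  proof -
    have "tilable T (Suc e) (snoc_prod (cpow (Aset T x) e - X - (\<Union>j\<in>set (i # is). Cset T x j e)) (Cdown T x))"
      using Cons.prems(5) by (rule tilable_snoc_prod)
    moreover have "tilable T (Suc e) (Cset T x i (Suc e) \<union> dagger_rest T x e)"
      using Cons.prems(3) by (simp add: tilable_Cset_Un_dagger_rest)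
    moreover have "disjnt (snoc_prod (cpow (Aset T x) e - X - (\<Union>j\<in>set (i # is). Cset T x j e)) (Cdown T x))
        (Cset T x i (Suc e) \<union> dagger_rest T x e)"
      using Cons.prems(3) by (auto simp: disjnt_def snoc_prod_def dagger_rest_def Cset_Suc Cdown_def)
    ultimately show ?thesis
      using Cons.prems cpow_diff_dagger_diff_Cset[of X T x e i "set is"] by (simp add: tilable_Un)
  qed
  ultimately have "tilable T (Suc e + length is)
      (cpow (Aset T x) (Suc e + length is) - dagger_pow T x (length is) (Suc e) ?X')"
    by (rule Cons.IH)
  then show ?case
    by (simp only: length_Cons dagger_pow_Suc_right add_Suc add_Suc_right)
qed

theorem corollary12:
  fixes T :: "'a::{ab_group_add, finite} set" and x :: 'a
    and d :: nat and "is" :: "nat list"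
  assumes "T \<noteq> {}" and "T \<noteq> UNIV"
    and "Tup T x \<noteq> T"
    and "d \<ge> 1"
    and "is \<noteq> []" and "distinct is" and "\<forall>i\<in>set is. i \<le> d"
  shows "hole T x (d + length is)
           (dagger_pow T x (length is) d
              (cpow (Aset T x) d - (\<Union>i\<in>set is. Cset T x i d)))"
proof -
  let ?X = "cpow (Aset T x) d - (\<Union>i\<in>set is. Cset T x i d)"
  have "cpow (Aset T x) d - ?X - (\<Union>i\<in>set is. Cset T x i d) = {}"
    by blast
  then have "tilable T d (cpow (Aset T x) d - ?X - (\<Union>i\<in>set is. Cset T x i d))"
    by (simp only: tilable_empty)
  then have "tilable T (d + length is) (cpow (Aset T x) (d + length is) - dagger_pow T x (length is) d ?X)"
    using assms(6,7) by (intro tilable_cpow_diff_dagger_pow) (auto simp: disjnt_def)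
  moreover have "dagger_pow T x (length is) d ?X \<subseteq> cpow (Aset T x) (d + length is)"
    by (rule dagger_pow_subset_cpow) blast
  ultimately show ?thesis
    unfolding hole_def by blast
qed

end
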